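(* Let $c_1,\dots,c_m:\{1,\dots,n\}\to\mathbb{R}$ be cost functions and $n$ a positive integer. For each $t\in\{1,\dots,m\}$ let $(f^*_t,\rho^*_t)$ be an optimal solution of the linear program $$\max_{f\in\mathbb{R}^n,\ \rho\in\mathbb{R}}\ \rho\quad\text{s.t.}\quad c_t(y)-\rho\,c_t(x)+(x-z)f(x)-(y-z)f(x+1)\ge0\quad\forall (x,y,z)\in\mathcal{I}_{\mathcal{R}},$$ where $f\in\mathbb{R}^n$ is viewed as a function $f:\{1,\dots,n\}\to\mathbb{R}$ and $c_t(0)=f(0)=f(n+1)=0$. Then $\mathbf{f}_{\mathrm{OPT}}=\{f^*_1,\dots,f^*_m\}$ is an optimal set of distribution rules, i.e. $\mathbf{f}_{\mathrm{OPT}}\in\arg\min_{\mathbf{f}=(f_1,\dots,f_m)\in\mathbb{R}^{n\times m}_{\ge0}}\mathrm{PoA}(\mathcal{G}^n_{\{(c_t,f_t)\}_{t=1}^m})$, and for the set of types $T^*=\{(c_t,f^*_t)\}_{t=1}^m$, $$\mathrm{PoA}(\mathcal{G}^n_{T^*})=\max_{t\in\{1,\dots,m\}}\frac{1}{\rho^*_t}.$$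
   Context: For a positive integer $n$ and a finite set of resource types $T=\{(c_1,f_1),\dots,(c_m,f_m)\}$ with $c_t,f_t:\{1,\dots,n\}\to\mathbb{R}$ and $c_t(0)=0$, the class $\mathcal{G}_T^n$ consists of all local resource allocation games: agent set $N=\{1,\dots,n\}$; a finite set of resources $\mathcal{R}$; for each $r\in\mathcal{R}$ a value $v_r\ge0$ and a type $(c,f)\in T$, giving $c_r=v_rc$, $f_r=v_rf$ (the $f_t$ are called distribution rules); action sets $\mathcal{A}_i\subseteq2^{\mathcal{R}}$, $\mathcal{A}=\mathcal{A}_1\times\dots\times\mathcal{A}_n$. For $a\in\mathcal{A}$, $|a|_r$ is the number of agents $i$ with $r\in a_i$; $C(a)=\sum_rc_r(|a|_r)$ and $J_i(a)=\sum_{r\in a_i}f_r(|a|_r)$. A Nash equilibrium is $a^{ne}$ with $J_i(a^{ne})\le J_i(a_i,a^{ne}_{-i})$ for all $a_i\in\mathcal{A}_i$, $i\in N$; $\mathrm{PoA}(G)=\max_{a\in\mathrm{NE}(G)}C(a)/\min_{a\in\mathcal{A}}C(a)$ and $\mathrm{PoA}(\mathcal{G}_T^n)=\sup_{G\in\mathcal{G}_T^n}\mathrm{PoA}(G)$. With $\mathbb{N}=\{0,1,2,\dots\}$: $\mathcal{I}=\{(x,y,z)\in\mathbb{N}^3:1\le x+y-z\le n,\ z\le\min\{x,y\}\}$, $\mathcal{I}_{\mathcal{R}}=\{(x,y,z)\in\mathcal{I}:x+y-z=n\text{ or }(x-z)(y-z)z=0\}$. *)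

theory Defs
  imports "HOL-Library.Extended_Real" "HOL-Library.FuncSet"
begin

text \<open>A function on {1..n}, extended by 0 outside {1..n} (so that c(0) = f(0) = f(n+1) = 0).\<close>
definition ext0 :: "nat \<Rightarrow> (nat \<Rightarrow> real) \<Rightarrow> nat \<Rightarrow> real" where
  "ext0 n g x = (if 1 \<le> x \<and> x \<le> n then g x else 0)"

definition Iset :: "nat \<Rightarrow> (nat \<times> nat \<times> nat) set" where
  "Iset n = {(x,y,z). 1 \<le> x + y - z \<and> x + y - z \<le> n \<and> z \<le> min x y}"

definition IRset :: "nat \<Rightarrow> (nat \<times> nat \<times> nat) set" where
  "IRset n = {(x,y,z) \<in> Iset n. x + y - z = n \<or> (x - z) * (y - z) * z = 0}"

definition lp_feasible :: "nat \<Rightarrow> (nat \<Rightarrow> real) \<Rightarrow> (nat \<Rightarrow> real) \<Rightarrow> real \<Rightarrow> bool" where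
  "lp_feasible n c f \<rho> \<longleftrightarrow>
     (\<forall>(x,y,z)\<in>IRset n. ext0 n c y - \<rho> * ext0 n c x + real (x - z) * ext0 n f x
                         - real (y - z) * ext0 n f (x + 1) \<ge> 0)"

definition lp_optimal :: "nat \<Rightarrow> (nat \<Rightarrow> real) \<Rightarrow> (nat \<Rightarrow> real) \<Rightarrow> real \<Rightarrow> bool" where
  "lp_optimal n c f \<rho> \<longleftrightarrow> lp_feasible n c f \<rho> \<and> (\<forall>f' \<rho>'. lp_feasible n c f' \<rho>' \<longrightarrow> \<rho>' \<le> \<rho>)"

text \<open>Games: agents {1..n}, resources a finite set R of naturals, values v, type index tau r in {1..m},
  action sets A i (subsets of Pow R). Joint actions are extensional functions on {1..n}.\<close>

definition valid_game :: "nat \<Rightarrow> nat \<Rightarrow> nat set \<Rightarrow> (nat \<Rightarrow> real) \<Rightarrow> (nat \<Rightarrow> nat) \<Rightarrow> (nat \<Rightarrow> nat set set) \<Rightarrow> bool" where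
  "valid_game n m R v tau A \<longleftrightarrow> finite R \<and> (\<forall>r\<in>R. v r \<ge> 0 \<and> tau r \<in> {1..m})
     \<and> (\<forall>i\<in>{1..n}. A i \<subseteq> Pow R)"

definition actions :: "nat \<Rightarrow> (nat \<Rightarrow> nat set set) \<Rightarrow> (nat \<Rightarrow> nat set) set" where
  "actions n A = PiE {1..n} A"

definition load :: "nat \<Rightarrow> (nat \<Rightarrow> nat set) \<Rightarrow> nat \<Rightarrow> nat" where
  "load n a r = card {i \<in> {1..n}. r \<in> a i}"

definition sys_cost :: "nat \<Rightarrow> (nat \<Rightarrow> nat \<Rightarrow> real) \<Rightarrow> nat set \<Rightarrow> (nat \<Rightarrow> real) \<Rightarrow> (nat \<Rightarrow> nat)
    \<Rightarrow> (nat \<Rightarrow> nat set) \<Rightarrow> real" where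
  "sys_cost n c R v tau a = (\<Sum>r\<in>R. v r * ext0 n (c (tau r)) (load n a r))"

definition agent_cost :: "nat \<Rightarrow> (nat \<Rightarrow> nat \<Rightarrow> real) \<Rightarrow> (nat \<Rightarrow> real) \<Rightarrow> (nat \<Rightarrow> nat)
    \<Rightarrow> (nat \<Rightarrow> nat set) \<Rightarrow> nat \<Rightarrow> real" where
  "agent_cost n f v tau a i = (\<Sum>r\<in>a i. v r * ext0 n (f (tau r)) (load n a r))"

definition is_NE :: "nat \<Rightarrow> (nat \<Rightarrow> nat \<Rightarrow> real) \<Rightarrow> (nat \<Rightarrow> real) \<Rightarrow> (nat \<Rightarrow> nat)
    \<Rightarrow> (nat \<Rightarrow> nat set set) \<Rightarrow> (nat \<Rightarrow> nat set) \<Rightarrow> bool" where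
  "is_NE n f v tau A a \<longleftrightarrow> a \<in> actions n A \<and>
     (\<forall>i\<in>{1..n}. \<forall>ai\<in>A i. agent_cost n f v tau a i \<le> agent_cost n f v tau (a(i := ai)) i)"

text \<open>PoA of a single game, in the extended reals (max over NE of C / min C; -infinity if no NE,
  so such games do not contribute to the supremum over the class).\<close>
definition PoA_game :: "nat \<Rightarrow> (nat \<Rightarrow> nat \<Rightarrow> real) \<Rightarrow> (nat \<Rightarrow> nat \<Rightarrow> real) \<Rightarrow> nat set
    \<Rightarrow> (nat \<Rightarrow> real) \<Rightarrow> (nat \<Rightarrow> nat) \<Rightarrow> (nat \<Rightarrow> nat set set) \<Rightarrow> ereal" where
  "PoA_game n c f R v tau A =
     Sup {ereal (sys_cost n c R v tau a) / (INF b\<in>actions n A. ereal (sys_cost n c R v tau b)) | a.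
          is_NE n f v tau A a}"

definition PoA_class :: "nat \<Rightarrow> nat \<Rightarrow> (nat \<Rightarrow> nat \<Rightarrow> real) \<Rightarrow> (nat \<Rightarrow> nat \<Rightarrow> real) \<Rightarrow> ereal" where
  "PoA_class n m c f = Sup {PoA_game n c f R v tau A | R v tau A. valid_game n m R v tau A}"

end

theory Submission
  imports Defs
begin

(*
  A feasible point (f_t, rho_t) of the linear program is a smoothness certificate. At a
  Nash equilibrium a, the unilateral deviations towards any profile b change the costs by
  sum_r v_r ((y_r - z_r) f(x_r + 1) - (x_r - z_r) f(x_r)) >= 0, where x_r, y_r, z_r are the loads of
  a, of b and of both at r. The LP constraint is affine in z, so it holds for all load triples once it
  holds on I_R; summed over the resources it gives (min_t rho_t) C(a) <= C(b).

  For an arbitrary rule g, the program restricted to the rules nu g has optimum at most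
  rho_t. Eliminating nu from this two-variable program (Fourier-Motzkin) yields a nonnegative
  combination of at most two constraints certifying its optimum. Laying out rotated copies of the two
  load patterns on blocks of n resources turns the certificate into a game in which one pattern is a
  Nash equilibrium for g and costs at least 1 / rho_t times the other.
*)

section \<open>The linear program\<close>

text \<open>Nash term of the constraint: at a resource of load \<open>x\<close>, the \<open>y - z\<close> players joining it
  unilaterally pay \<open>f (x + 1)\<close> each, the \<open>x - z\<close> players leaving it save \<open>f x\<close> each.\<close>

definition deviation_excess :: "nat \<Rightarrow> (nat \<Rightarrow> real) \<Rightarrow> nat \<Rightarrow> nat \<Rightarrow> nat \<Rightarrow> real" where
  "deviation_excess n f x y z = real (y - z) * ext0 n f (x + 1) - real (x - z) * ext0 n f x"

lemma ext0_eq [simp]: "x \<in> {1..n} \<Longrightarrow> ext0 n g x = g x"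
  by (simp add: ext0_def)

lemma ext0_0 [simp]: "ext0 n g 0 = 0"
  by (simp add: ext0_def)

lemma lp_feasible_iff:
  "lp_feasible n c f \<rho> \<longleftrightarrow>
     (\<forall>(x, y, z)\<in>IRset n. \<rho> * ext0 n c x + deviation_excess n f x y z \<le> ext0 n c y)"
  unfolding lp_feasible_def deviation_excess_def by (force simp: algebra_simps)

lemma lp_feasibleD:
  "lp_feasible n c f \<rho> \<Longrightarrow> (x, y, z) \<in> IRset n \<Longrightarrow>
     \<rho> * ext0 n c x + deviation_excess n f x y z \<le> ext0 n c y"
  unfolding lp_feasible_iff by blast

lemma lp_feasible_one_imp_linear:
  assumes feas: "lp_feasible n c f 1" and k: "k \<in> {1..n}"
  shows "c k = real k * c 1 \<and> f k = c 1"
proof -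
  have constr: "ext0 n c x + deviation_excess n f x y z \<le> ext0 n c y" if "(x, y, z) \<in> IRset n" for x y z
    using lp_feasibleD[OF feas that] by simp
  have "1 \<le> k" "k \<le> n" using k by auto
  then show ?thesis
  proof (induction k rule: nat_induct_at_least)
    case base
    show ?case
      using constr[of 1 0 0] constr[of 0 1 0] base by (simp add: IRset_def Iset_def deviation_excess_def)
  next
    case (Suc k)
    have IH: "c k = real k * c 1" "f k = c 1" using Suc by auto
    have f1: "f 1 = c 1"
      using constr[of 1 0 0] constr[of 0 1 0] Suc by (simp add: IRset_def Iset_def deviation_excess_def)
    have upper_f: "f (Suc k) \<le> c 1"
      using constr[of k 1 0] Suc IH by (simp add: IRset_def Iset_def deviation_excess_def)
    have lower_c: "real (Suc k) * c 1 \<le> c (Suc k)"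
      using constr[of 0 "Suc k" 0] Suc f1 by (simp add: IRset_def Iset_def deviation_excess_def)
    have c_le_f: "c (Suc k) \<le> real (Suc k) * f (Suc k)"
      using constr[of "Suc k" 0 0] Suc by (simp add: IRset_def Iset_def deviation_excess_def)
    have "real (Suc k) * f (Suc k) \<le> real (Suc k) * c 1"
      using upper_f by (intro mult_left_mono) auto
    then have c_eq: "c (Suc k) = real (Suc k) * c 1" using lower_c c_le_f by linarith
    then have "c 1 \<le> f (Suc k)" using c_le_f by (simp add: mult_le_cancel_left_pos del: of_nat_Suc)
    with c_eq upper_f show ?case by simp
  qed
qed

lemma lp_feasible_cost_nonpos_if_neg:
  assumes feas: "lp_feasible n c f \<rho>" and x: "x \<in> {1..n}" and j: "j \<in> {1..n}" and neg: "c x < 0"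
  shows "c j \<le> 0"
proof (rule ccontr)
  assume pos: "\<not> c j \<le> 0"
  have diag: "\<rho> * c i \<le> 1 * c i" if "i \<in> {1..n}" for i
    using lp_feasibleD[OF feas, of i i i] that by (simp add: IRset_def Iset_def deviation_excess_def)
  have "1 \<le> \<rho>" using diag[OF x] neg mult_le_cancel_right[of \<rho> "c x" 1] by simp
  moreover have "\<rho> \<le> 1" using diag[OF j] pos mult_le_cancel_right[of \<rho> "c j" 1] by simp
  ultimately have "lp_feasible n c f 1" using feas by simp
  then have "c x = real x * c 1" "c j = real j * c 1"
    using lp_feasible_one_imp_linear x j by blast+
  moreover have "c 1 < 0" using \<open>c x = real x * c 1\<close> x neg by (simp add: mult_less_0_iff)
  ultimately have "c j \<le> 0" by (simp add: mult_nonneg_nonpos)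
  with pos show False by simp
qed

text \<open>An optimum can only exist for nonnegative costs: costs of both signs leave the LP infeasible,
  and nonpositive, somewhere negative costs make it unbounded in \<open>\<rho>\<close>.\<close>
lemma lp_optimal_cost_nonneg:
  assumes opt: "lp_optimal n c f \<rho>" and x: "x \<in> {1..n}"
  shows "0 \<le> c x"
proof (rule ccontr)
  assume "\<not> 0 \<le> c x"
  have feas: "lp_feasible n c f \<rho>" using opt by (simp add: lp_optimal_def)
  then have nonpos: "ext0 n c k \<le> 0" for k
    using lp_feasible_cost_nonpos_if_neg[OF feas x] \<open>\<not> 0 \<le> c x\<close> by (simp add: ext0_def)
  have "lp_feasible n c f (\<rho> + 1)"
    unfolding lp_feasible_iff
  proof clarify
    fix x y z assume "(x, y, z) \<in> IRset n"
    then have "\<rho> * ext0 n c x + deviation_excess n f x y z \<le> ext0 n c y"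
      by (rule lp_feasibleD[OF feas])
    with nonpos[of x] show "(\<rho> + 1) * ext0 n c x + deviation_excess n f x y z \<le> ext0 n c y"
      by (simp add: distrib_right)
  qed
  then show False using opt by (fastforce simp: lp_optimal_def)
qed

lemma lp_optimal_rho_nonneg:
  assumes opt: "lp_optimal n c f \<rho>"
  shows "0 \<le> \<rho>"
proof -
  have "lp_feasible n c (\<lambda>_. 0) 0"
    using lp_optimal_cost_nonneg[OF opt] by (auto simp: lp_feasible_iff deviation_excess_def ext0_def)
  then show ?thesis using opt by (simp add: lp_optimal_def)
qed

lemma lp_optimal_rule_nonneg:
  assumes opt: "lp_optimal n c f \<rho>" and x: "x \<in> {1..n}"
  shows "0 \<le> f x"
proof -
  have "\<rho> * c x \<le> real x * f x"
    using lp_feasibleD[of n c f \<rho> x 0 0] opt x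
    by (simp add: lp_optimal_def IRset_def Iset_def deviation_excess_def)
  moreover have "0 \<le> \<rho> * c x"
    using lp_optimal_rho_nonneg[OF opt] lp_optimal_cost_nonneg[OF opt x] by (rule mult_nonneg_nonneg)
  ultimately have "0 \<le> real x * f x" by linarith
  then show ?thesis using x by (simp add: zero_le_mult_iff)
qed

lemma affine_nonneg_between:
  fixes a b w :: real
  assumes "lo \<le> w" "w \<le> hi" "0 \<le> a + b * lo" "0 \<le> a + b * hi"
  shows "0 \<le> a + b * w"
proof (cases "0 \<le> b")
  case True
  then show ?thesis using assms(1,3) mult_left_mono[OF assms(1) True] by linarith
next
  case False
  then show ?thesis using assms(2,4) mult_left_mono_neg[OF assms(2), of b] by linarith
qed

text \<open>The constraint is affine in \<open>z\<close>, and for fixed \<open>x, y\<close> the two extreme overlaps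
  lie in \<open>IRset n\<close>: this is why \<open>IRset n\<close> may replace \<open>Iset n\<close>.\<close>
lemma lp_feasible_load_constraint:
  assumes feas: "lp_feasible n c f \<rho>" and "z \<le> x" "z \<le> y" "x + y - z \<le> n"
  shows "\<rho> * ext0 n c x + deviation_excess n f x y z \<le> ext0 n c y"
proof (cases "x + y - z = 0")
  case True
  then have "x = 0" "y = 0" "z = 0" using assms by auto
  then show ?thesis by (simp add: deviation_excess_def)
next
  case False
  define lo where "lo = x + y - min n (x + y)"
  define hi where "hi = min x y"
  define a where "a = ext0 n c y - \<rho> * ext0 n c x - real y * ext0 n f (x + 1) + real x * ext0 n f x"
  define b where "b = ext0 n f (x + 1) - ext0 n f x"
  have excess: "ext0 n c y - (\<rho> * ext0 n c x + deviation_excess n f x y w) = a + b * real w"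
    if "w \<le> x" "w \<le> y" for w
    using that by (simp add: a_def b_def deviation_excess_def of_nat_diff algebra_simps)
  have bounds: "lo \<le> z" "z \<le> hi" "hi \<le> x" "hi \<le> y" "lo \<le> x" "lo \<le> y"
    using assms by (auto simp: lo_def hi_def)
  have "(x, y, lo) \<in> IRset n" "(x, y, hi) \<in> IRset n"
    using assms False by (auto simp: IRset_def Iset_def lo_def hi_def min_def)
  moreover have "0 \<le> a + b * real w" if "(x, y, w) \<in> IRset n" "w \<le> x" "w \<le> y" for w
    using lp_feasibleD[OF feas that(1)] excess[OF that(2,3)] by linarith
  ultimately have "0 \<le> a + b * real lo" "0 \<le> a + b * real hi"
    using bounds by blast+
  then have "0 \<le> a + b * real z"
    using affine_nonneg_between[of "real lo" "real z" "real hi"] bounds by simp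
  then show ?thesis using excess[of z] assms by simp
qed

section \<open>Smoothness and the upper bound\<close>

lemma sum_sum_eq_sum_card:
  fixes h :: "'b \<Rightarrow> real"
  assumes "finite R" "finite N" "\<forall>i\<in>N. S i \<subseteq> R"
  shows "(\<Sum>i\<in>N. \<Sum>r\<in>S i. h r) = (\<Sum>r\<in>R. real (card {i\<in>N. r \<in> S i}) * h r)"
proof -
  have "(\<Sum>i\<in>N. \<Sum>r\<in>S i. h r) = (\<Sum>i\<in>N. \<Sum>r\<in>{r\<in>R. r \<in> S i}. h r)"
    using assms(3) by (intro sum.cong) auto
  also have "\<dots> = (\<Sum>r\<in>R. \<Sum>i\<in>{i\<in>N. r \<in> S i}. h r)"
    using assms(2,1) by (rule sum.swap_restrict)
  finally show ?thesis by simp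
qed

lemma load_fun_upd:
  assumes "i \<in> {1..n}" "r \<in> B"
  shows "load n (a(i := B)) r = (if r \<in> a i then load n a r else load n a r + 1)"
proof -
  have "{j\<in>{1..n}. r \<in> (a(i := B)) j} = insert i {j\<in>{1..n}. r \<in> a j}"
    using assms by auto
  then have "load n (a(i := B)) r = card (insert i {j\<in>{1..n}. r \<in> a j})"
    by (simp add: load_def)
  then show ?thesis using assms(1) by (simp add: load_def card_insert_if)
qed

lemma load_overlap:
  shows "card {i\<in>{1..n}. r \<in> a i \<inter> b i} \<le> load n a r"
    and "load n b r = card {i\<in>{1..n}. r \<in> a i \<inter> b i} + card {i\<in>{1..n}. r \<in> b i - a i}"
    and "load n a r + load n b r - card {i\<in>{1..n}. r \<in> a i \<inter> b i} \<le> n"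
proof -
  define Na where "Na = {i\<in>{1..n}. r \<in> a i}"
  define Nb where "Nb = {i\<in>{1..n}. r \<in> b i}"
  have both: "{i\<in>{1..n}. r \<in> a i \<inter> b i} = Na \<inter> Nb" "{i\<in>{1..n}. r \<in> b i - a i} = Nb - Na"
    by (auto simp: Na_def Nb_def)
  have fin: "finite Na" "finite Nb" by (simp_all add: Na_def Nb_def)
  show "card {i\<in>{1..n}. r \<in> a i \<inter> b i} \<le> load n a r"
    unfolding both load_def Na_def[symmetric] using fin by (simp add: card_mono)
  show "load n b r = card {i\<in>{1..n}. r \<in> a i \<inter> b i} + card {i\<in>{1..n}. r \<in> b i - a i}"
    unfolding both load_def Nb_def[symmetric] using fin by (subst card_Int_Diff[of Nb Na]) (simp_all add: Int_commute)
  have "card (Na \<union> Nb) \<le> n"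
    by (rule order_trans[OF card_mono[of "{1..n}"]]) (auto simp: Na_def Nb_def)
  then show "load n a r + load n b r - card {i\<in>{1..n}. r \<in> a i \<inter> b i} \<le> n"
    unfolding both load_def Na_def[symmetric] Nb_def[symmetric] using card_Un_Int[OF fin] by simp
qed

lemma sum_agent_cost:
  assumes "finite R" "\<forall>i\<in>{1..n}. a i \<subseteq> R"
  shows "(\<Sum>i=1..n. agent_cost n f v tau a i)
    = (\<Sum>r\<in>R. real (load n a r) * (v r * ext0 n (f (tau r)) (load n a r)))"
  unfolding agent_cost_def load_def using assms by (intro sum_sum_eq_sum_card) auto

lemma sum_deviation_cost:
  assumes "finite R" "\<forall>i\<in>{1..n}. a i \<subseteq> R \<and> b i \<subseteq> R"
  shows "(\<Sum>i=1..n. agent_cost n f v tau (a(i := b i)) i)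
    = (\<Sum>r\<in>R. real (card {i\<in>{1..n}. r \<in> a i \<inter> b i}) * (v r * ext0 n (f (tau r)) (load n a r))
             + real (card {i\<in>{1..n}. r \<in> b i - a i}) * (v r * ext0 n (f (tau r)) (load n a r + 1)))"
proof -
  define G where "G r k = v r * ext0 n (f (tau r)) k" for r k
  have "agent_cost n f v tau (a(i := b i)) i
      = (\<Sum>r\<in>a i \<inter> b i. G r (load n a r)) + (\<Sum>r\<in>b i - a i. G r (load n a r + 1))"
    if i: "i \<in> {1..n}" for i
  proof -
    have "finite (b i)" using assms i by (meson finite_subset)
    then have "agent_cost n f v tau (a(i := b i)) i
        = (\<Sum>r\<in>b i \<inter> a i. G r (load n (a(i := b i)) r)) + (\<Sum>r\<in>b i - a i. G r (load n (a(i := b i)) r))"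
      unfolding agent_cost_def G_def by (simp add: sum.Int_Diff[symmetric])
    then show ?thesis using i by (simp add: load_fun_upd Int_commute)
  qed
  then have "(\<Sum>i=1..n. agent_cost n f v tau (a(i := b i)) i)
      = (\<Sum>i=1..n. \<Sum>r\<in>a i \<inter> b i. G r (load n a r)) + (\<Sum>i=1..n. \<Sum>r\<in>b i - a i. G r (load n a r + 1))"
    by (simp add: sum.distrib)
  also have "\<dots> = (\<Sum>r\<in>R. real (card {i\<in>{1..n}. r \<in> a i \<inter> b i}) * G r (load n a r))
      + (\<Sum>r\<in>R. real (card {i\<in>{1..n}. r \<in> b i - a i}) * G r (load n a r + 1))"
    using assms by (subst (1 2) sum_sum_eq_sum_card[where R = R]) auto
  finally show ?thesis by (simp add: G_def sum.distrib)
qed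

lemma sum_deviation_change:
  assumes "finite R" "\<forall>i\<in>{1..n}. a i \<subseteq> R \<and> b i \<subseteq> R"
  shows "(\<Sum>i=1..n. agent_cost n f v tau (a(i := b i)) i - agent_cost n f v tau a i)
    = (\<Sum>r\<in>R. v r * deviation_excess n (f (tau r)) (load n a r) (load n b r)
                   (card {i\<in>{1..n}. r \<in> a i \<inter> b i}))"
proof -
  have "v r * deviation_excess n (f (tau r)) (load n a r) (load n b r) (card {i\<in>{1..n}. r \<in> a i \<inter> b i})
      = real (card {i\<in>{1..n}. r \<in> a i \<inter> b i}) * (v r * ext0 n (f (tau r)) (load n a r))
        + real (card {i\<in>{1..n}. r \<in> b i - a i}) * (v r * ext0 n (f (tau r)) (load n a r + 1))
        - real (load n a r) * (v r * ext0 n (f (tau r)) (load n a r))" for r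
    using load_overlap(1,2)[where n = n and r = r and a = a and b = b]
    by (simp add: deviation_excess_def of_nat_diff algebra_simps)
  then show ?thesis
    using sum_agent_cost[of R n a] sum_deviation_cost[OF assms] assms
    by (simp add: sum_subtractf)
qed

lemma valid_game_action_subset:
  assumes "valid_game n m R v tau A" "a \<in> actions n A" "i \<in> {1..n}"
  shows "a i \<in> A i" "a i \<subseteq> R"
proof -
  show "a i \<in> A i" using assms(2,3) by (simp add: actions_def PiE_mem)
  then show "a i \<subseteq> R" using assms(1,3) unfolding valid_game_def by blast
qed

lemma nash_smoothness:
  assumes game: "valid_game n m R v tau A" and ne: "is_NE n f v tau A a" and b: "b \<in> actions n A"
    and feas: "\<forall>t\<in>{1..m}. lp_feasible n (c t) (f t) (\<rho> t)"
  shows "(\<Sum>r\<in>R. v r * (\<rho> (tau r) * ext0 n (c (tau r)) (load n a r))) \<le> sys_cost n c R v tau b"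
proof -
  define Z where "Z r = card {i\<in>{1..n}. r \<in> a i \<inter> b i}" for r
  define dev where "dev r = v r * deviation_excess n (f (tau r)) (load n a r) (load n b r) (Z r)" for r
  have R: "finite R" "\<forall>r\<in>R. 0 \<le> v r \<and> tau r \<in> {1..m}"
    using game by (auto simp: valid_game_def)
  have a: "a \<in> actions n A" using ne by (simp add: is_NE_def)
  have "0 \<le> (\<Sum>i=1..n. agent_cost n f v tau (a(i := b i)) i - agent_cost n f v tau a i)"
    using ne valid_game_action_subset(1)[OF game b] by (intro sum_nonneg) (simp add: is_NE_def)
  also have "\<dots> = (\<Sum>r\<in>R. dev r)"
    unfolding dev_def Z_def
    using valid_game_action_subset(2)[OF game a] valid_game_action_subset(2)[OF game b]
    by (intro sum_deviation_change R(1)) blast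
  finally have "0 \<le> (\<Sum>r\<in>R. dev r)" .
  moreover have "v r * (\<rho> (tau r) * ext0 n (c (tau r)) (load n a r)) + dev r
      \<le> v r * ext0 n (c (tau r)) (load n b r)" if r: "r \<in> R" for r
  proof -
    have "\<rho> (tau r) * ext0 n (c (tau r)) (load n a r) + deviation_excess n (f (tau r)) (load n a r) (load n b r) (Z r)
        \<le> ext0 n (c (tau r)) (load n b r)"
      using feas R(2) r load_overlap[where n = n and r = r and a = a and b = b]
      by (intro lp_feasible_load_constraint) (auto simp: Z_def)
    then show ?thesis
      using R(2) r mult_left_mono by (fastforce simp: dev_def distrib_left[symmetric])
  qed
  then have "(\<Sum>r\<in>R. v r * (\<rho> (tau r) * ext0 n (c (tau r)) (load n a r))) + (\<Sum>r\<in>R. dev r)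
      \<le> sys_cost n c R v tau b"
    unfolding sys_cost_def sum.distrib[symmetric] by (rule sum_mono)
  ultimately show ?thesis by linarith
qed

lemma ereal_divide_le_inverse:
  fixes Q :: ereal
  assumes r: "0 < r" and x: "0 \<le> x" and lower: "ereal (r * x) \<le> Q" and upper: "Q \<le> ereal x"
  shows "ereal x / Q \<le> 1 / ereal r"
proof -
  obtain q where q: "Q = ereal q" using lower upper by (cases Q) auto
  then have "r * x \<le> q" "q \<le> x" using lower upper by auto
  show ?thesis
  proof (cases "q = 0")
    case True
    then have "x = 0" using \<open>r * x \<le> q\<close> r x by (simp add: mult_le_0_iff)
    then show ?thesis using q True r by (simp add: one_ereal_def)
  next
    case False
    have "0 \<le> q" using \<open>r * x \<le> q\<close> r x by (meson mult_nonneg_nonneg order_trans less_imp_le)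
    with False have "0 < q" by simp
    then have "x / q \<le> 1 / r" using \<open>r * x \<le> q\<close> r by (simp add: field_simps)
    then show ?thesis using q False r by (simp add: one_ereal_def)
  qed
qed

lemma sys_cost_nonneg:
  assumes "valid_game n m R v tau A" and "\<forall>t\<in>{1..m}. \<forall>x\<in>{1..n}. 0 \<le> c t x"
  shows "0 \<le> sys_cost n c R v tau a"
  using assms unfolding sys_cost_def valid_game_def by (intro sum_nonneg) (simp add: ext0_def)

lemma PoA_game_le:
  assumes game: "valid_game n m R v tau A"
    and feas: "\<forall>t\<in>{1..m}. lp_feasible n (c t) (f t) (\<rho> t)"
    and cost: "\<forall>t\<in>{1..m}. \<forall>x\<in>{1..n}. 0 \<le> c t x"
    and \<rho>\<^sub>0: "0 \<le> \<rho>\<^sub>0" "\<forall>t\<in>{1..m}. \<rho>\<^sub>0 \<le> \<rho> t"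
  shows "PoA_game n c f R v tau A \<le> 1 / ereal \<rho>\<^sub>0"
  unfolding PoA_game_def
proof (rule Sup_least, clarify)
  fix a assume ne: "is_NE n f v tau A a"
  show "ereal (sys_cost n c R v tau a) / (INF b\<in>actions n A. ereal (sys_cost n c R v tau b)) \<le> 1 / ereal \<rho>\<^sub>0"
  proof (cases "\<rho>\<^sub>0 = 0")
    case True
    then show ?thesis by (simp add: one_ereal_def)
  next
    case False
    have "\<rho>\<^sub>0 * sys_cost n c R v tau a \<le> sys_cost n c R v tau b" if b: "b \<in> actions n A" for b
    proof -
      have "\<rho>\<^sub>0 * sys_cost n c R v tau a = (\<Sum>r\<in>R. v r * (\<rho>\<^sub>0 * ext0 n (c (tau r)) (load n a r)))"
        unfolding sys_cost_def by (simp add: sum_distrib_left algebra_simps)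
      also have "\<dots> \<le> (\<Sum>r\<in>R. v r * (\<rho> (tau r) * ext0 n (c (tau r)) (load n a r)))"
        using game cost \<rho>\<^sub>0 unfolding valid_game_def
        by (intro sum_mono mult_left_mono mult_right_mono) (auto simp: ext0_def)
      also have "\<dots> \<le> sys_cost n c R v tau b"
        by (rule nash_smoothness[OF game ne b feas])
      finally show ?thesis .
    qed
    then have "ereal (\<rho>\<^sub>0 * sys_cost n c R v tau a) \<le> (INF b\<in>actions n A. ereal (sys_cost n c R v tau b))"
      by (simp add: le_INF_iff)
    moreover have "(INF b\<in>actions n A. ereal (sys_cost n c R v tau b)) \<le> ereal (sys_cost n c R v tau a)"
      using ne by (intro INF_lower) (simp add: is_NE_def)
    ultimately show ?thesis
      using False \<rho>\<^sub>0(1) sys_cost_nonneg[OF game cost] by (intro ereal_divide_le_inverse) auto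
  qed
qed

lemma PoA_class_le:
  assumes "\<forall>t\<in>{1..m}. lp_feasible n (c t) (f t) (\<rho> t)"
    and "\<forall>t\<in>{1..m}. \<forall>x\<in>{1..n}. 0 \<le> c t x"
    and "0 \<le> \<rho>\<^sub>0" "\<forall>t\<in>{1..m}. \<rho>\<^sub>0 \<le> \<rho> t"
  shows "PoA_class n m c f \<le> 1 / ereal \<rho>\<^sub>0"
  unfolding PoA_class_def using PoA_game_le[OF _ assms] by (auto intro: Sup_least)

section \<open>Duality for the program restricted to a ray of rules\<close>

lemma ex_greater_mult_le:
  fixes \<alpha> \<beta> :: "'i \<Rightarrow> real"
  assumes "finite I" and "\<forall>i\<in>I. \<rho> * \<beta> i \<le> \<alpha> i \<and> (0 < \<beta> i \<longrightarrow> \<rho> * \<beta> i < \<alpha> i)"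
  shows "\<exists>\<rho>'>\<rho>. \<forall>i\<in>I. \<rho>' * \<beta> i \<le> \<alpha> i"
proof -
  define \<rho>' where "\<rho>' = Min (insert (\<rho> + 1) ((\<lambda>i. \<alpha> i / \<beta> i) ` {i\<in>I. 0 < \<beta> i}))"
  have "\<rho> < \<rho>'"
    using assms by (auto simp: \<rho>'_def less_divide_eq mult.commute)
  moreover have "\<rho>' * \<beta> i \<le> \<alpha> i" if i: "i \<in> I" for i
  proof (cases "0 < \<beta> i")
    case True
    then have "\<rho>' \<le> \<alpha> i / \<beta> i" using assms(1) i by (simp add: \<rho>'_def)
    then show ?thesis using True by (simp add: le_divide_eq)
  next
    case False
    then have "\<rho>' * \<beta> i \<le> \<rho> * \<beta> i" using \<open>\<rho> < \<rho>'\<close> by (simp add: mult_right_mono_neg)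
    then show ?thesis using assms(2) i by fastforce
  qed
  ultimately show ?thesis by blast
qed

lemma fourier_motzkin_one_variable:
  fixes e r :: "'a \<Rightarrow> real"
  assumes "finite S"
    and zero: "\<forall>s\<in>S. e s = 0 \<longrightarrow> 0 \<le> r s"
    and pairs: "\<forall>s\<in>S. \<forall>t\<in>S. e s < 0 \<longrightarrow> 0 < e t \<longrightarrow> e s * r t \<le> e t * r s"
  shows "\<exists>\<nu>. \<forall>s\<in>S. \<nu> * e s \<le> r s"
proof -
  define L where "L = (\<lambda>s. r s / e s) ` {s\<in>S. e s < 0}"
  define U where "U = (\<lambda>t. r t / e t) ` {t\<in>S. 0 < e t}"
  have fin: "finite L" "finite U" using assms(1) by (simp_all add: L_def U_def)
  have LU: "l \<le> u" if lu: "l \<in> L" "u \<in> U" for l u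
  proof -
    obtain s t where st: "s \<in> S" "e s < 0" "l = r s / e s" "t \<in> S" "0 < e t" "u = r t / e t"
      using lu by (auto simp: L_def U_def)
    then have "(e s * e t) * u \<le> (e s * e t) * l" using pairs st by (simp add: mult_ac)
    moreover have "e s * e t < 0" using st by (simp add: mult_neg_pos)
    ultimately show ?thesis by (simp add: mult_le_cancel_left)
  qed
  obtain \<nu> where lower: "\<forall>l\<in>L. l \<le> \<nu>" and upper: "\<forall>u\<in>U. \<nu> \<le> u"
  proof (cases "L = {}")
    case True
    then show ?thesis using that[of "Min (insert 0 U)"] fin(2) by simp
  next
    case False
    then show ?thesis using that fin(1) LU by (meson Max_ge Max_in)
  qed
  have "\<nu> * e s \<le> r s" if s: "s \<in> S" for s
  proof (cases "e s < 0")
    case True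
    then have "r s / e s \<le> \<nu>" using lower s by (auto simp: L_def)
    then show ?thesis using True by (simp add: divide_le_eq)
  next
    case False
    show ?thesis
    proof (cases "0 < e s")
      case True
      then have "\<nu> \<le> r s / e s" using upper s by (auto simp: U_def)
      then show ?thesis using True by (simp add: le_divide_eq)
    qed (use False zero s in auto)
  qed
  then show ?thesis by blast
qed

lemma slack_without_certificate:
  fixes C D E :: "'a \<Rightarrow> real"
  assumes fin: "finite S" and nonneg: "\<forall>s\<in>S. 0 \<le> C s \<and> 0 \<le> D s"
    and strict: "\<And>s t \<theta>\<^sub>1 \<theta>\<^sub>2. s \<in> S \<Longrightarrow> t \<in> S \<Longrightarrow> 0 \<le> \<theta>\<^sub>1 \<Longrightarrow> 0 \<le> \<theta>\<^sub>2 \<Longrightarrow>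
      0 \<le> \<theta>\<^sub>1 * E s + \<theta>\<^sub>2 * E t \<Longrightarrow> 0 < \<theta>\<^sub>1 * C s + \<theta>\<^sub>2 * C t \<Longrightarrow>
      \<rho> * (\<theta>\<^sub>1 * C s + \<theta>\<^sub>2 * C t) < \<theta>\<^sub>1 * D s + \<theta>\<^sub>2 * D t"
  shows "\<exists>\<rho>'>\<rho>. (\<forall>s\<in>S. E s = 0 \<longrightarrow> \<rho>' * C s \<le> D s)
    \<and> (\<forall>s\<in>S. \<forall>t\<in>S. E s < 0 \<longrightarrow> 0 < E t \<longrightarrow> \<rho>' * (E t * C s - E s * C t) \<le> E t * D s - E s * D t)"
proof -
  \<comment> \<open>The weights \<open>(E t, - E s)\<close> cancel the \<open>E\<close>-terms of a pair with \<open>E s \<le> 0 \<le> E t\<close>;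
    the diagonal pairs carry the single constraints with \<open>E s = 0\<close>.\<close>
  define I where "I = {(s, t) \<in> S \<times> S. E s \<le> 0 \<and> 0 \<le> E t}"
  define w\<^sub>1 where "w\<^sub>1 s t = (if s = t then 1 else E t)" for s t
  define w\<^sub>2 where "w\<^sub>2 s t = (if s = t then 0 else - E s)" for s t
  define \<beta> where "\<beta> = (\<lambda>(s, t). w\<^sub>1 s t * C s + w\<^sub>2 s t * C t)"
  define \<alpha> where "\<alpha> = (\<lambda>(s, t). w\<^sub>1 s t * D s + w\<^sub>2 s t * D t)"
  have "\<forall>p\<in>I. \<rho> * \<beta> p \<le> \<alpha> p \<and> (0 < \<beta> p \<longrightarrow> \<rho> * \<beta> p < \<alpha> p)"
  proof clarify
    fix s t assume "(s, t) \<in> I"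
    then have st: "s \<in> S" "t \<in> S" "0 \<le> w\<^sub>1 s t" "0 \<le> w\<^sub>2 s t" "w\<^sub>1 s t * E s + w\<^sub>2 s t * E t = 0"
      by (auto simp: I_def w\<^sub>1_def w\<^sub>2_def)
    then have "0 \<le> \<beta> (s, t)" "0 \<le> \<alpha> (s, t)" using nonneg by (simp_all add: \<beta>_def \<alpha>_def)
    moreover have "0 < \<beta> (s, t) \<Longrightarrow> \<rho> * \<beta> (s, t) < \<alpha> (s, t)"
      using strict st by (simp add: \<beta>_def \<alpha>_def)
    ultimately show "\<rho> * \<beta> (s, t) \<le> \<alpha> (s, t) \<and> (0 < \<beta> (s, t) \<longrightarrow> \<rho> * \<beta> (s, t) < \<alpha> (s, t))"
      by force
  qed
  moreover have "finite I" using fin by (auto simp: I_def intro: finite_subset[of _ "S \<times> S"])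
  ultimately obtain \<rho>' where "\<rho> < \<rho>'" and slack: "\<forall>p\<in>I. \<rho>' * \<beta> p \<le> \<alpha> p"
    using ex_greater_mult_le by blast
  have "\<rho>' * C s \<le> D s" if "s \<in> S" "E s = 0" for s
    using that slack[rule_format, of "(s, s)"] by (simp add: I_def \<alpha>_def \<beta>_def w\<^sub>1_def w\<^sub>2_def)
  moreover have "\<rho>' * (E t * C s - E s * C t) \<le> E t * D s - E s * D t"
    if "s \<in> S" "t \<in> S" "E s < 0" "0 < E t" for s t
  proof -
    have "s \<noteq> t" using that by auto
    then show ?thesis using that slack[rule_format, of "(s, t)"]
      by (simp add: I_def \<alpha>_def \<beta>_def w\<^sub>1_def w\<^sub>2_def algebra_simps)
  qed
  ultimately show ?thesis using \<open>\<rho> < \<rho>'\<close> by blast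
qed

lemma two_point_certificate:
  fixes C D E :: "'a \<Rightarrow> real"
  assumes fin: "finite S" and nonneg: "\<forall>s\<in>S. 0 \<le> C s \<and> 0 \<le> D s"
    and max: "\<forall>\<rho>' \<nu>. (\<forall>s\<in>S. \<rho>' * C s + \<nu> * E s \<le> D s) \<longrightarrow> \<rho>' \<le> \<rho>"
  shows "\<exists>s\<in>S. \<exists>t\<in>S. \<exists>\<theta>\<^sub>1 \<theta>\<^sub>2. 0 \<le> \<theta>\<^sub>1 \<and> 0 \<le> \<theta>\<^sub>2 \<and> 0 \<le> \<theta>\<^sub>1 * E s + \<theta>\<^sub>2 * E t
     \<and> 0 < \<theta>\<^sub>1 * C s + \<theta>\<^sub>2 * C t \<and> \<theta>\<^sub>1 * D s + \<theta>\<^sub>2 * D t \<le> \<rho> * (\<theta>\<^sub>1 * C s + \<theta>\<^sub>2 * C t)"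
proof (rule ccontr)
  assume no_certificate: "\<not> ?thesis"
  have "\<rho> * (\<theta>\<^sub>1 * C s + \<theta>\<^sub>2 * C t) < \<theta>\<^sub>1 * D s + \<theta>\<^sub>2 * D t"
    if "s \<in> S" "t \<in> S" "0 \<le> \<theta>\<^sub>1" "0 \<le> \<theta>\<^sub>2" "0 \<le> \<theta>\<^sub>1 * E s + \<theta>\<^sub>2 * E t"
      "0 < \<theta>\<^sub>1 * C s + \<theta>\<^sub>2 * C t" for s t \<theta>\<^sub>1 \<theta>\<^sub>2
    using no_certificate that by (meson not_le)
  then obtain \<rho>' where "\<rho> < \<rho>'" and zero: "\<forall>s\<in>S. E s = 0 \<longrightarrow> \<rho>' * C s \<le> D s"
    and pairs: "\<forall>s\<in>S. \<forall>t\<in>S. E s < 0 \<longrightarrow> 0 < E t \<longrightarrow> \<rho>' * (E t * C s - E s * C t) \<le> E t * D s - E s * D t"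
    using slack_without_certificate[OF fin nonneg] by blast
  have "\<exists>\<nu>. \<forall>s\<in>S. \<nu> * E s \<le> D s - \<rho>' * C s"
    using zero pairs by (intro fourier_motzkin_one_variable[OF fin]) (auto simp: algebra_simps)
  then obtain \<nu> where "\<forall>s\<in>S. \<rho>' * C s + \<nu> * E s \<le> D s" by (auto simp: algebra_simps)
  with max \<open>\<rho> < \<rho>'\<close> show False by (meson not_le)
qed

lemma deviation_excess_scale:
  "deviation_excess n (\<lambda>k. \<nu> * g k) x y z = \<nu> * deviation_excess n g x y z"
  by (simp add: deviation_excess_def ext0_def algebra_simps)

lemma finite_IRset: "finite (IRset n)"
  by (rule finite_subset[of _ "{0..n} \<times> {0..n} \<times> {0..n}"]) (auto simp: IRset_def Iset_def)

text \<open>The rule \<open>g\<close> is arbitrary: restricting the LP to the rules \<open>\<nu> g\<close> cannot raise its optimum,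
  and the certificate is the dual of this two-variable LP in \<open>(\<rho>, \<nu>)\<close>.\<close>
lemma lp_optimal_certificate:
  assumes opt: "lp_optimal n c f \<rho>"
  obtains x y z :: "nat \<Rightarrow> nat" and \<theta> :: "nat \<Rightarrow> real"
  where "\<forall>k<2. (x k, y k, z k) \<in> IRset n \<and> 0 \<le> \<theta> k"
    and "0 \<le> (\<Sum>k<2. \<theta> k * deviation_excess n g (x k) (y k) (z k))"
    and "0 < (\<Sum>k<2. \<theta> k * ext0 n c (x k))"
    and "(\<Sum>k<2. \<theta> k * ext0 n c (y k)) \<le> \<rho> * (\<Sum>k<2. \<theta> k * ext0 n c (x k))"
proof -
  define C :: "nat \<times> nat \<times> nat \<Rightarrow> real" where "C = (\<lambda>(x, y, z). ext0 n c x)"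
  define D :: "nat \<times> nat \<times> nat \<Rightarrow> real" where "D = (\<lambda>(x, y, z). ext0 n c y)"
  define E :: "nat \<times> nat \<times> nat \<Rightarrow> real" where "E = (\<lambda>(x, y, z). deviation_excess n g x y z)"
  have "\<forall>s\<in>IRset n. 0 \<le> C s \<and> 0 \<le> D s"
    using lp_optimal_cost_nonneg[OF opt] by (auto simp: C_def D_def ext0_def)
  moreover have "\<forall>\<rho>' \<nu>. (\<forall>s\<in>IRset n. \<rho>' * C s + \<nu> * E s \<le> D s) \<longrightarrow> \<rho>' \<le> \<rho>"
  proof clarify
    fix \<rho>' \<nu> assume feas: "\<forall>s\<in>IRset n. \<rho>' * C s + \<nu> * E s \<le> D s"
    have "lp_feasible n c (\<lambda>k. \<nu> * g k) \<rho>'"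
      unfolding lp_feasible_iff
    proof clarify
      fix x y z assume "(x, y, z) \<in> IRset n"
      then show "\<rho>' * ext0 n c x + deviation_excess n (\<lambda>k. \<nu> * g k) x y z \<le> ext0 n c y"
        using feas[rule_format, of "(x, y, z)"] by (simp add: C_def D_def E_def deviation_excess_scale)
    qed
    then show "\<rho>' \<le> \<rho>" using opt by (simp add: lp_optimal_def)
  qed
  ultimately obtain s t \<theta>\<^sub>1 \<theta>\<^sub>2 where st: "s \<in> IRset n" "t \<in> IRset n" "0 \<le> \<theta>\<^sub>1" "0 \<le> \<theta>\<^sub>2"
    "0 \<le> \<theta>\<^sub>1 * E s + \<theta>\<^sub>2 * E t" "0 < \<theta>\<^sub>1 * C s + \<theta>\<^sub>2 * C t"
    "\<theta>\<^sub>1 * D s + \<theta>\<^sub>2 * D t \<le> \<rho> * (\<theta>\<^sub>1 * C s + \<theta>\<^sub>2 * C t)"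
    using two_point_certificate[OF finite_IRset] by blast
  obtain x\<^sub>1 y\<^sub>1 z\<^sub>1 x\<^sub>2 y\<^sub>2 z\<^sub>2 where "s = (x\<^sub>1, y\<^sub>1, z\<^sub>1)" "t = (x\<^sub>2, y\<^sub>2, z\<^sub>2)"
    by (cases s, cases t) auto
  with st show thesis
    using that[of "\<lambda>k. if k = 0 then x\<^sub>1 else x\<^sub>2" "\<lambda>k. if k = 0 then y\<^sub>1 else y\<^sub>2"
        "\<lambda>k. if k = 0 then z\<^sub>1 else z\<^sub>2" "\<lambda>k. if k = 0 then \<theta>\<^sub>1 else \<theta>\<^sub>2"]
    by (simp add: numeral_2_eq_2 C_def D_def E_def)
qed

section \<open>Rotation games and the lower bound\<close>

lemma bij_betw_add_mod:
  fixes n :: nat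
  shows "bij_betw (\<lambda>j. (j + u) mod n) {s..<s + n} {..<n}"
proof -
  have inj: "inj_on (\<lambda>j. (j + u) mod n) {s..<s + n}"
  proof (rule linorder_inj_onI')
    fix i j assume "i \<in> {s..<s + n}" "j \<in> {s..<s + n}" "i < j"
    then have "\<not> n dvd (j + u) - (i + u)" using nat_dvd_not_less[of "j - i" n] by auto
    then show "(i + u) mod n \<noteq> (j + u) mod n"
      using \<open>i < j\<close> mod_eq_dvd_iff_nat[of "i + u" "j + u" n] by auto
  qed
  moreover have "(\<lambda>j. (j + u) mod n) ` {s..<s + n} = {..<n}"
  proof (rule card_subset_eq)
    show "card ((\<lambda>j. (j + u) mod n) ` {s..<s + n}) = card {..<n}"
      using inj by (simp add: card_image)
  qed (auto simp: mod_less_divisor)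
  ultimately show ?thesis by (simp add: bij_betw_def)
qed

lemma sum_rotated_blocks:
  fixes F :: "nat \<Rightarrow> nat \<Rightarrow> 'a::comm_monoid_add"
  shows "(\<Sum>r<K * n. F (r div n) ((u + r) mod n)) = (\<Sum>k<K. \<Sum>p<n. F k p)"
proof (induction K)
  case (Suc K)
  have "r div n = K" if "r \<in> {K * n..<K * n + n}" for r
    using that by (intro div_nat_eqI) (auto simp: mult.commute)
  then have "(\<Sum>r\<in>{K * n..<K * n + n}. F (r div n) ((u + r) mod n))
      = (\<Sum>r\<in>{K * n..<K * n + n}. F K ((r + u) mod n))"
    by (simp add: add.commute)
  also have "\<dots> = (\<Sum>p<n. F K p)"
    by (rule sum.reindex_bij_betw[OF bij_betw_add_mod])
  finally have block: "(\<Sum>r\<in>{K * n..<K * n + n}. F (r div n) ((u + r) mod n)) = (\<Sum>p<n. F K p)" .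
  have split: "{..<Suc K * n} = {..<K * n} \<union> {K * n..<K * n + n}" by auto
  have "(\<Sum>r<Suc K * n. F (r div n) ((u + r) mod n))
      = (\<Sum>r<K * n. F (r div n) ((u + r) mod n)) + (\<Sum>r\<in>{K * n..<K * n + n}. F (r div n) ((u + r) mod n))"
    unfolding split by (rule sum.union_disjoint) auto
  then show ?case using Suc block by simp
qed simp

lemma card_rotated_agents:
  fixes n :: nat
  shows "card {i\<in>{1..n}. (i + r) mod n \<in> B} = card (B \<inter> {..<n})"
proof -
  have bij: "bij_betw (\<lambda>i. (i + r) mod n) {1..n} {..<n}"
    using bij_betw_add_mod[where u = r and s = 1 and n = n] by (simp add: atLeastLessThanSuc_atLeastAtMost)
  have "(\<lambda>i. (i + r) mod n) ` {i\<in>{1..n}. (i + r) mod n \<in> B} = (\<lambda>i. (i + r) mod n) ` {1..n} \<inter> B"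
    by auto
  also have "\<dots> = B \<inter> {..<n}" using bij by (auto simp: bij_betw_def)
  finally have image: "(\<lambda>i. (i + r) mod n) ` {i\<in>{1..n}. (i + r) mod n \<in> B} = B \<inter> {..<n}" .
  have "inj_on (\<lambda>i. (i + r) mod n) {i\<in>{1..n}. (i + r) mod n \<in> B}"
    using bij by (auto simp: bij_betw_def intro: inj_on_subset)
  then show ?thesis using card_image image by fastforce
qed

text \<open>Resources come in \<open>K\<close> blocks of \<open>n\<close>. The agents' positions are rotations of each
  other, so every resource of block \<open>k\<close> carries \<open>card (P k)\<close> agents and all agents face the same costs.\<close>
definition rotation_action :: "nat \<Rightarrow> nat \<Rightarrow> (nat \<Rightarrow> nat set) \<Rightarrow> nat \<Rightarrow> nat set" where
  "rotation_action n K P i = {r\<in>{..<K * n}. (i + r) mod n \<in> P (r div n)}"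

lemma load_rotation_action:
  assumes "\<forall>k<K. P k \<subseteq> {..<n}" "r < K * n"
  shows "load n (restrict (rotation_action n K P) {1..n}) r = card (P (r div n))"
proof -
  have "{i\<in>{1..n}. r \<in> restrict (rotation_action n K P) {1..n} i} = {i\<in>{1..n}. (i + r) mod n \<in> P (r div n)}"
    using assms(2) by (auto simp: rotation_action_def)
  moreover have "P (r div n) \<subseteq> {..<n}" using assms by (simp add: less_mult_imp_div_less)
  ultimately show ?thesis
    using card_rotated_agents[of n r "P (r div n)"] by (simp add: load_def Int_absorb2)
qed

lemma sys_cost_rotation_action:
  assumes "\<forall>k<K. P k \<subseteq> {..<n}"
  shows "sys_cost n c {..<K * n} (\<lambda>r. \<theta> (r div n)) (\<lambda>_. t) (restrict (rotation_action n K P) {1..n})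
    = real n * (\<Sum>k<K. \<theta> k * ext0 n (c t) (card (P k)))"
proof -
  have "sys_cost n c {..<K * n} (\<lambda>r. \<theta> (r div n)) (\<lambda>_. t) (restrict (rotation_action n K P) {1..n})
      = (\<Sum>r<K * n. \<theta> (r div n) * ext0 n (c t) (card (P (r div n))))"
    unfolding sys_cost_def using load_rotation_action[OF assms] by (intro sum.cong) auto
  also have "\<dots> = (\<Sum>k<K. real n * (\<theta> k * ext0 n (c t) (card (P k))))"
    using sum_rotated_blocks[where F = "\<lambda>k p. \<theta> k * ext0 n (c t) (card (P k))" and u = 0] by simp
  finally show ?thesis by (simp add: sum_distrib_left)
qed

lemma agent_cost_rotation_action:
  assumes "i \<in> {1..n}" "\<forall>k<K. P k \<subseteq> {..<n} \<and> Q k \<subseteq> {..<n}"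
  shows "agent_cost n f (\<lambda>r. \<theta> (r div n)) (\<lambda>_. t)
      ((restrict (rotation_action n K P) {1..n})(i := rotation_action n K Q i)) i
    = (\<Sum>k<K. \<theta> k * (real (card (Q k \<inter> P k)) * ext0 n (f t) (card (P k))
                     + real (card (Q k - P k)) * ext0 n (f t) (card (P k) + 1)))"
proof -
  define a where "a = restrict (rotation_action n K P) {1..n}"
  define G where "G k p = ext0 n (f t) (card (P k) + (if p \<in> P k then 0 else 1))" for k p
  have load: "load n (a(i := rotation_action n K Q i)) r = card (P (r div n)) + (if (i + r) mod n \<in> P (r div n) then 0 else 1)"
    if r: "r \<in> rotation_action n K Q i" for r
  proof -
    have "r < K * n" using r by (simp add: rotation_action_def)
    then have "load n a r = card (P (r div n))" "r \<in> a i \<longleftrightarrow> (i + r) mod n \<in> P (r div n)"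
      using assms load_rotation_action[of K P n r] by (auto simp: a_def rotation_action_def)
    then show ?thesis using load_fun_upd[OF assms(1) r, of a] by simp
  qed
  have "agent_cost n f (\<lambda>r. \<theta> (r div n)) (\<lambda>_. t) (a(i := rotation_action n K Q i)) i
      = (\<Sum>r\<in>rotation_action n K Q i. \<theta> (r div n) * G (r div n) ((i + r) mod n))"
    unfolding agent_cost_def by (intro sum.cong) (simp_all add: load G_def)
  also have "\<dots> = (\<Sum>r<K * n. (\<lambda>k p. if p \<in> Q k then \<theta> k * G k p else 0) (r div n) ((i + r) mod n))"
    unfolding rotation_action_def by (subst sum.inter_filter) simp_all
  also have "\<dots> = (\<Sum>k<K. \<Sum>p<n. if p \<in> Q k then \<theta> k * G k p else 0)"
    by (rule sum_rotated_blocks)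
  also have "\<dots> = (\<Sum>k<K. \<theta> k * (\<Sum>p\<in>Q k. G k p))"
  proof (rule sum.cong[OF refl])
    fix k assume "k \<in> {..<K}"
    then have "{..<n} \<inter> Q k = Q k" using assms(2) by auto
    then show "(\<Sum>p<n. if p \<in> Q k then \<theta> k * G k p else 0) = \<theta> k * (\<Sum>p\<in>Q k. G k p)"
      using sum.inter_restrict[of "{..<n}" "\<lambda>p. \<theta> k * G k p" "Q k"] by (simp add: sum_distrib_left)
  qed
  also have "\<dots> = (\<Sum>k<K. \<theta> k * ((\<Sum>p\<in>Q k \<inter> P k. G k p) + (\<Sum>p\<in>Q k - P k. G k p)))"
  proof (rule sum.cong[OF refl])
    fix k assume "k \<in> {..<K}"
    then have "finite (Q k)" using assms(2) finite_subset[of "Q k" "{..<n}"] by auto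
    then show "\<theta> k * sum (G k) (Q k) = \<theta> k * (sum (G k) (Q k \<inter> P k) + sum (G k) (Q k - P k))"
      by (simp add: sum.Int_Diff[of "Q k" "G k" "P k"])
  qed
  finally show ?thesis by (simp add: a_def G_def)
qed

lemma is_NE_rotation_game:
  assumes patterns: "\<forall>k<K. P k \<subseteq> {..<n} \<and> Q k \<subseteq> {..<n}"
    and gain: "0 \<le> (\<Sum>k<K. \<theta> k * (real (card (Q k \<inter> P k)) * ext0 n (f t) (card (P k))
                    + real (card (Q k - P k)) * ext0 n (f t) (card (P k) + 1)
                    - real (card (P k)) * ext0 n (f t) (card (P k))))"
  shows "is_NE n f (\<lambda>r. \<theta> (r div n)) (\<lambda>_. t) (\<lambda>i. {rotation_action n K P i, rotation_action n K Q i})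
    (restrict (rotation_action n K P) {1..n})"
  unfolding is_NE_def actions_def
proof (intro conjI ballI)
  define a where "a = restrict (rotation_action n K P) {1..n}"
  fix i ai assume i: "i \<in> {1..n}" and "ai \<in> {rotation_action n K P i, rotation_action n K Q i}"
  then consider "ai = a i" | "ai = rotation_action n K Q i" by (auto simp: a_def)
  then show "agent_cost n f (\<lambda>r. \<theta> (r div n)) (\<lambda>_. t) a i
      \<le> agent_cost n f (\<lambda>r. \<theta> (r div n)) (\<lambda>_. t) (a(i := ai)) i"
  proof cases
    case 2
    have "a(i := rotation_action n K P i) = a" using i by (auto simp: a_def fun_eq_iff)
    then have "agent_cost n f (\<lambda>r. \<theta> (r div n)) (\<lambda>_. t) a i
        = (\<Sum>k<K. \<theta> k * (real (card (P k)) * ext0 n (f t) (card (P k))))"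
      using agent_cost_rotation_action[OF i, of K P P, folded a_def] patterns by simp
    then show ?thesis
      using agent_cost_rotation_action[OF i patterns, folded a_def] gain 2
      by (simp add: sum_subtractf algebra_simps)
  qed simp
qed auto

lemma worst_case_game:
  fixes K :: nat and x y z :: "nat \<Rightarrow> nat" and \<theta> :: "nat \<Rightarrow> real"
  assumes t: "t \<in> {1..m}"
    and tuples: "\<forall>k<K. (x k, y k, z k) \<in> Iset n \<and> 0 \<le> \<theta> k"
    and nash: "0 \<le> (\<Sum>k<K. \<theta> k * deviation_excess n (f t) (x k) (y k) (z k))"
  obtains R v tau A a b where "valid_game n m R v tau A" "is_NE n f v tau A a" "b \<in> actions n A"
    "sys_cost n c R v tau a = real n * (\<Sum>k<K. \<theta> k * ext0 n (c t) (x k))"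
    "sys_cost n c R v tau b = real n * (\<Sum>k<K. \<theta> k * ext0 n (c t) (y k))"
proof -
  define P where "P k = {..<x k}" for k
  define Q where "Q k = {..<z k} \<union> {x k..<x k + y k - z k}" for k
  have PQ: "P k \<subseteq> {..<n} \<and> Q k \<subseteq> {..<n}" "card (P k) = x k" "card (Q k) = y k"
    "card (Q k \<inter> P k) = z k" "card (Q k - P k) = y k - z k" if "k < K" for k
  proof -
    have bounds: "z k \<le> x k" "z k \<le> y k" "x k + y k - z k \<le> n"
      using tuples that by (auto simp: Iset_def)
    then show "P k \<subseteq> {..<n} \<and> Q k \<subseteq> {..<n}" "card (P k) = x k"
      by (auto simp: P_def Q_def)
    have "card (Q k) = z k + (x k + y k - z k - x k)"
      unfolding Q_def using bounds by (subst card_Un_disjoint) auto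
    then show "card (Q k) = y k" using bounds by simp
    have "Q k \<inter> P k = {..<z k}" "Q k - P k = {x k..<x k + y k - z k}"
      using bounds by (auto simp: P_def Q_def)
    then show "card (Q k \<inter> P k) = z k" "card (Q k - P k) = y k - z k" by simp_all
  qed
  define A where "A i = {rotation_action n K P i, rotation_action n K Q i}" for i
  have "valid_game n m {..<K * n} (\<lambda>r. \<theta> (r div n)) (\<lambda>_. t) A"
    using tuples t by (auto simp: valid_game_def A_def rotation_action_def less_mult_imp_div_less)
  moreover have "is_NE n f (\<lambda>r. \<theta> (r div n)) (\<lambda>_. t) A (restrict (rotation_action n K P) {1..n})"
  proof -
    have "(\<Sum>k<K. \<theta> k * deviation_excess n (f t) (x k) (y k) (z k))
        = (\<Sum>k<K. \<theta> k * (real (card (Q k \<inter> P k)) * ext0 n (f t) (card (P k))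
            + real (card (Q k - P k)) * ext0 n (f t) (card (P k) + 1) - real (card (P k)) * ext0 n (f t) (card (P k))))"
      using tuples PQ by (intro sum.cong refl) (simp add: deviation_excess_def Iset_def of_nat_diff algebra_simps)
    then show ?thesis
      unfolding A_def using is_NE_rotation_game[of K P n Q] PQ(1) nash by simp
  qed
  moreover have "restrict (rotation_action n K Q) {1..n} \<in> actions n A"
    by (auto simp: actions_def A_def)
  moreover have "sys_cost n c {..<K * n} (\<lambda>r. \<theta> (r div n)) (\<lambda>_. t) (restrict (rotation_action n K P) {1..n})
      = real n * (\<Sum>k<K. \<theta> k * ext0 n (c t) (x k))"
    using sys_cost_rotation_action[of K P n c \<theta> t] PQ by simp
  moreover have "sys_cost n c {..<K * n} (\<lambda>r. \<theta> (r div n)) (\<lambda>_. t) (restrict (rotation_action n K Q) {1..n})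
      = real n * (\<Sum>k<K. \<theta> k * ext0 n (c t) (y k))"
    using sys_cost_rotation_action[of K Q n c \<theta> t] PQ by simp
  ultimately show thesis by (rule that)
qed

lemma ereal_inverse_le_divide:
  fixes Q :: ereal
  assumes x: "0 < x" and r: "0 \<le> r" and lower: "0 \<le> Q" and upper: "Q \<le> ereal (r * x)"
  shows "1 / ereal r \<le> ereal x / Q"
proof -
  obtain q where q: "Q = ereal q" using lower upper by (cases Q) auto
  then have "0 \<le> q" "q \<le> r * x" using lower upper by auto
  show ?thesis
  proof (cases "q = 0")
    case True
    then show ?thesis using q x by simp
  next
    case False
    with \<open>0 \<le> q\<close> have "0 < q" by simp
    with \<open>q \<le> r * x\<close> have "0 < r * x" by linarith
    with x have "0 < r" by (simp add: zero_less_mult_iff)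
    with \<open>0 < q\<close> \<open>q \<le> r * x\<close> have "1 / r \<le> x / q" by (simp add: field_simps)
    then show ?thesis using q \<open>0 < q\<close> \<open>0 < r\<close> by (simp add: one_ereal_def)
  qed
qed

lemma PoA_class_ge_certificate:
  fixes K :: nat and x y z :: "nat \<Rightarrow> nat" and \<theta> :: "nat \<Rightarrow> real"
  assumes n: "0 < n" and t: "t \<in> {1..m}" and cost: "\<forall>t\<in>{1..m}. \<forall>x\<in>{1..n}. 0 \<le> c t x"
    and \<rho>: "0 \<le> \<rho>"
    and tuples: "\<forall>k<K. (x k, y k, z k) \<in> Iset n \<and> 0 \<le> \<theta> k"
    and nash: "0 \<le> (\<Sum>k<K. \<theta> k * deviation_excess n (f t) (x k) (y k) (z k))"
    and pos: "0 < (\<Sum>k<K. \<theta> k * ext0 n (c t) (x k))"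
    and ratio: "(\<Sum>k<K. \<theta> k * ext0 n (c t) (y k)) \<le> \<rho> * (\<Sum>k<K. \<theta> k * ext0 n (c t) (x k))"
  shows "1 / ereal \<rho> \<le> PoA_class n m c f"
proof -
  obtain R v tau A a b where game: "valid_game n m R v tau A" and ne: "is_NE n f v tau A a"
    and b: "b \<in> actions n A"
    and cost_a: "sys_cost n c R v tau a = real n * (\<Sum>k<K. \<theta> k * ext0 n (c t) (x k))"
    and cost_b: "sys_cost n c R v tau b = real n * (\<Sum>k<K. \<theta> k * ext0 n (c t) (y k))"
    using worst_case_game[where f = f and t = t and c = c, OF t tuples nash] .
  define opt where "opt = (INF b'\<in>actions n A. ereal (sys_cost n c R v tau b'))"
  have "0 \<le> opt" using sys_cost_nonneg[OF game cost] by (simp add: opt_def le_INF_iff)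
  moreover have "opt \<le> ereal (\<rho> * sys_cost n c R v tau a)"
  proof -
    have "opt \<le> ereal (sys_cost n c R v tau b)" unfolding opt_def using b by (rule INF_lower)
    moreover have "sys_cost n c R v tau b \<le> \<rho> * sys_cost n c R v tau a"
      unfolding cost_a cost_b using ratio mult_left_mono[OF ratio, of "real n"] by (simp add: mult_ac)
    ultimately show ?thesis by (simp add: order_trans)
  qed
  moreover have "0 < sys_cost n c R v tau a" using cost_a pos n by simp
  ultimately have "1 / ereal \<rho> \<le> ereal (sys_cost n c R v tau a) / opt"
    using \<rho> by (intro ereal_inverse_le_divide) auto
  also have "\<dots> \<le> PoA_game n c f R v tau A"
    unfolding PoA_game_def opt_def using ne by (intro Sup_upper) blast
  also have "\<dots> \<le> PoA_class n m c f"
    unfolding PoA_class_def using game by (intro Sup_upper) blast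
  finally show ?thesis .
qed

lemma PoA_class_ge_inverse_rho:
  assumes n: "0 < n" and t: "t \<in> {1..m}" and cost: "\<forall>t\<in>{1..m}. \<forall>x\<in>{1..n}. 0 \<le> c t x"
    and opt: "lp_optimal n (c t) g \<rho>"
  shows "1 / ereal \<rho> \<le> PoA_class n m c f"
proof -
  obtain x y z :: "nat \<Rightarrow> nat" and \<theta> :: "nat \<Rightarrow> real"
    where "\<forall>k<2. (x k, y k, z k) \<in> IRset n \<and> 0 \<le> \<theta> k"
      and "0 \<le> (\<Sum>k<2. \<theta> k * deviation_excess n (f t) (x k) (y k) (z k))"
      and "0 < (\<Sum>k<2. \<theta> k * ext0 n (c t) (x k))"
      and "(\<Sum>k<2. \<theta> k * ext0 n (c t) (y k)) \<le> \<rho> * (\<Sum>k<2. \<theta> k * ext0 n (c t) (x k))"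
    using lp_optimal_certificate[OF opt] .
  then show ?thesis
    using PoA_class_ge_certificate[OF n t cost lp_optimal_rho_nonneg[OF opt], of 2 x y z \<theta>]
    by (auto simp: IRset_def)
qed

theorem theorem6:
  fixes n m :: nat and c fstar :: "nat \<Rightarrow> nat \<Rightarrow> real" and \<rho> :: "nat \<Rightarrow> real"
  assumes "n \<ge> 1" and "m \<ge> 1"
    and "\<forall>t\<in>{1..m}. lp_optimal n (c t) (fstar t) (\<rho> t)"
  shows "(\<forall>t\<in>{1..m}. \<forall>x\<in>{1..n}. fstar t x \<ge> 0)
    \<and> (\<forall>f :: nat \<Rightarrow> nat \<Rightarrow> real. (\<forall>t\<in>{1..m}. \<forall>x\<in>{1..n}. f t x \<ge> 0)
          \<longrightarrow> PoA_class n m c fstar \<le> PoA_class n m c f)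
    \<and> PoA_class n m c fstar = (MAX t\<in>{1..m}. 1 / ereal (\<rho> t))"
proof -
  note opt = assms(3)
  have n: "0 < n" using assms(1) by simp
  have types: "finite {1..m}" "{1..m} \<noteq> {}" using assms(2) by auto
  have cost: "\<forall>t\<in>{1..m}. \<forall>x\<in>{1..n}. 0 \<le> c t x" using opt lp_optimal_cost_nonneg by blast
  define t\<^sub>0 where "t\<^sub>0 = arg_min_on \<rho> {1..m}"
  have t\<^sub>0: "t\<^sub>0 \<in> {1..m}" "\<forall>t\<in>{1..m}. \<rho> t\<^sub>0 \<le> \<rho> t"
    unfolding t\<^sub>0_def using arg_min_if_finite(1)[OF types, of \<rho>] arg_min_least[OF types, where f = \<rho>]
    by auto
  define M where "M = (MAX t\<in>{1..m}. 1 / ereal (\<rho> t))"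
  have lower: "M \<le> PoA_class n m c f" for f
    unfolding M_def using types opt PoA_class_ge_inverse_rho[OF n _ cost] by (auto intro: Max.boundedI)
  have "0 \<le> \<rho> t\<^sub>0" using opt t\<^sub>0(1) lp_optimal_rho_nonneg by blast
  then have "PoA_class n m c fstar \<le> 1 / ereal (\<rho> t\<^sub>0)"
    using opt t\<^sub>0(2) by (intro PoA_class_le[OF _ cost]) (auto simp: lp_optimal_def)
  also have "\<dots> \<le> M" unfolding M_def using types t\<^sub>0(1) by (intro Max_ge) auto
  finally have upper: "PoA_class n m c fstar \<le> M" .
  show ?thesis
    using opt lp_optimal_rule_nonneg upper lower[of fstar] order_trans[OF upper lower]
    by (auto simp: M_def)
qed

end
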